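(* Let $\mathbf{Q}\subseteq\mathbb{R}^N$ be a bounded convex set, $\phi:\mathbf{Q}\to\mathbb{R}_{\ge0}$ with $0<\int_{\mathbf{Q}}\phi\,\mathrm{d}\mathbf{q}\le\eta<\infty$, $\lambda:\mathbb{R}_{\ge0}\to\mathbb{R}_{\ge0}$ with $\lim_{t\to\infty}\lambda(t)=0$, and agent positions $\mathbf{p}_1(t),\dots,\mathbf{p}_n(t)\in\mathbf{Q}$, $\mathbf{P}(t)=\{\mathbf{p}_1(t),\dots,\mathbf{p}_n(t)\}$. Define $$\hat H(t)=\hat H(t,\mathbf{P}(t))=\frac12\sum_{i=1}^n\int_{\mathbf{Q}}h_\lambda(t,R_i)\lVert\mathbf{q}-\mathbf{p}_i(t)\rVert^2\phi(\mathbf{q})\,\mathrm{d}\mathbf{q},$$ where $h_\lambda(t,R_i)=\exp\{-R_i(\mathbf{q},\mathbf{P}(t))/\lambda(t)\}$ and $R_i(\mathbf{q},\mathbf{P}(t))=\sum_{l=1}^n\kappa(\lVert\mathbf{q}-\mathbf{p}_i(t)\rVert-\lVert\mathbf{q}-\mathbf{p}_l(t)\rVert)$. Then for each $i$, $$\frac{\partial\hat H(t)}{\partial\mathbf{p}_i(t)}=-\int_{\mathbf{Q}}h_\lambda(t,R_i)\big(\mathbf{q}-\mathbf{p}_i(t)\big)\phi(\mathbf{q})\,\mathrm{d}\mathbf{q}.$$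
   Context: $\kappa$ is the Heaviside function ($\kappa(c)=1$ for $c>0$, $0$ for $c\le0$), whose derivative $\delta$ is taken with the convention $\delta(x)=0$ for $x\ne0$, $\int\delta=1$; derivatives of $R_i$ are computed by the chain rule with $\kappa'=\delta$. $\lVert\cdot\rVert$ is the Euclidean norm. *)

theory Defs
  imports "HOL-Analysis.Analysis"
begin

definition kappa :: "real \<Rightarrow> real" where
  "kappa c = (if c > 0 then 1 else 0)"

definition Rfun :: "nat \<Rightarrow> (nat \<Rightarrow> 'a::euclidean_space) \<Rightarrow> nat \<Rightarrow> 'a \<Rightarrow> real" where
  "Rfun n P i q = (\<Sum>l = 1..n. kappa (norm (q - P i) - norm (q - P l)))"

text \<open>h_lambda(t, R_i) = exp(- R_i(q,P) / lambda(t)); here lam is the value lambda(t).\<close>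
definition hlam :: "real \<Rightarrow> nat \<Rightarrow> (nat \<Rightarrow> 'a::euclidean_space) \<Rightarrow> nat \<Rightarrow> 'a \<Rightarrow> real" where
  "hlam lam n P i q = exp (- Rfun n P i q / lam)"

definition Hhat :: "real \<Rightarrow> 'a::euclidean_space set \<Rightarrow> ('a \<Rightarrow> real) \<Rightarrow> nat \<Rightarrow> (nat \<Rightarrow> 'a) \<Rightarrow> real" where
  "Hhat lam Q \<phi> n P =
     1/2 * (\<Sum>i = 1..n. integral Q (\<lambda>q. hlam lam n P i q * (norm (q - P i))^2 * \<phi> q))"

end

theory Submission
  imports Defs
begin

text \<open>
  Write \<open>Hhat\<close> as the integral of \<open>\<phi>\<close> against the density
  \<open>\<Sum>j. W(R\<^sub>j) \<parallel>q - p\<^sub>j\<parallel>\<^sup>2\<close>, where \<open>R\<^sub>j\<close> is the rank of agent \<open>j\<close> by distance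
  to \<open>q\<close> and \<open>W k = exp (-k/\<lambda>)\<close>. Off the bisectors of the agents (a null set) all
  distances to \<open>q\<close> are distinct, so the ranks do not change when \<open>p\<^sub>i\<close> moves a little,
  and the density is differentiable in \<open>p\<^sub>i\<close> with derivative
  \<open>-2 W(R\<^sub>i) (q - p\<^sub>i)\<close>. A rank can only change for an agent whose distance lies
  between the old and the new distance of agent \<open>i\<close>, which makes the density Lipschitz
  in \<open>\<parallel>q - p\<^sub>i\<parallel>\<^sup>2\<close> with constant \<open>n\<close>. This provides an integrable bound for the
  difference quotients, and dominated convergence along sequences differentiates under
  the integral.
\<close>

definition rank_in :: "'a set \<Rightarrow> ('a \<Rightarrow> 'b::linorder) \<Rightarrow> 'a \<Rightarrow> nat" where
  "rank_in J d j = card {l \<in> J. d l < d j}"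

lemma rank_in_less_mono:
  assumes "finite J" "u \<in> J" "d u < d v"
  shows "rank_in J d u < rank_in J d v"
  unfolding rank_in_def
  by (rule psubset_card_mono) (use assms in \<open>auto dest: less_trans\<close>)

lemma bij_betw_rank_in:
  assumes "finite J" "inj_on d J"
  shows "bij_betw (rank_in J d) J {..<card J}"
proof -
  have inj: "inj_on (rank_in J d) J"
  proof (rule inj_onI)
    fix u v assume "u \<in> J" "v \<in> J" "rank_in J d u = rank_in J d v"
    then show "u = v"
      using rank_in_less_mono[OF assms(1), of u d v] rank_in_less_mono[OF assms(1), of v d u]
        inj_onD[OF assms(2)] by (metis less_irrefl linorder_neqE)
  qed
  moreover have "rank_in J d ` J \<subseteq> {..<card J}"
    unfolding rank_in_def using assms(1) by (auto intro!: psubset_card_mono)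
  ultimately have "rank_in J d ` J = {..<card J}"
    by (simp add: card_image card_subset_eq)
  with inj show ?thesis by (simp add: bij_betw_def)
qed

lemma sum_rank_in:
  assumes "finite J" "inj_on d J"
  shows "(\<Sum>j\<in>J. W (rank_in J d j)) = (\<Sum>k<card J. W k)"
  using sum.reindex_bij_betw[OF bij_betw_rank_in[OF assms]] .

lemma rank_in_fun_upd:
  assumes "j \<in> J" "i \<in> J"
    and "\<forall>l\<in>J - {i}. (d l < e \<longleftrightarrow> d l < d i) \<and> (e < d l \<longleftrightarrow> d i < d l)"
  shows "rank_in J (d(i := e)) j = rank_in J d j"
  unfolding rank_in_def by (rule arg_cong[where f=card]) (use assms in auto)

lemma rank_in_fun_upd_other:
  assumes "j \<in> J" "j \<noteq> i" "e < d j \<longleftrightarrow> d i < d j"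
  shows "rank_in J (d(i := e)) j = rank_in J d j"
  unfolding rank_in_def by (rule arg_cong[where f=card]) (use assms in auto)

lemma eventually_rank_in_fun_upd:
  fixes d :: "'a \<Rightarrow> 'b::linorder_topology"
  assumes "finite J" "i \<in> J" "\<forall>l\<in>J - {i}. d l \<noteq> d i"
  shows "eventually (\<lambda>e. \<forall>j\<in>J. rank_in J (d(i := e)) j = rank_in J d j) (nhds (d i))"
proof -
  have "eventually (\<lambda>e. (d l < e \<longleftrightarrow> d l < d i) \<and> (e < d l \<longleftrightarrow> d i < d l)) (nhds (d i))"
    if "l \<in> J - {i}" for l
  proof (cases "d l < d i")
    case True
    show ?thesis using order_tendstoD(1)[OF filterlim_ident True] by eventually_elim (use True in auto)
  next
    case False
    moreover have "d l \<noteq> d i" using that assms(3) by blast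
    ultimately have "d i < d l" by simp
    show ?thesis using order_tendstoD(2)[OF filterlim_ident \<open>d i < d l\<close>]
      by eventually_elim (use \<open>d i < d l\<close> in auto)
  qed
  then have "eventually (\<lambda>e. \<forall>l\<in>J - {i}. (d l < e \<longleftrightarrow> d l < d i) \<and> (e < d l \<longleftrightarrow> d i < d l)) (nhds (d i))"
    using assms(1) by (simp add: eventually_ball_finite)
  then show ?thesis
  proof eventually_elim
    case (elim e)
    show ?case using rank_in_fun_upd[OF _ assms(2) elim] by blast
  qed
qed

text \<open>The total weight is invariant under re-ranking, so only the differences
  \<open>d j - d i\<close> enter the change of the weighted sum.\<close>

lemma rank_weighted_sum_fun_upd_eq:
  fixes d :: "'a \<Rightarrow> real" and W :: "nat \<Rightarrow> real"
  assumes "finite J" "i \<in> J" "inj_on d J" "inj_on (d(i := e)) J"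
  shows "(\<Sum>j\<in>J. W (rank_in J (d(i := e)) j) * (d(i := e)) j) - (\<Sum>j\<in>J. W (rank_in J d j) * d j)
    = W (rank_in J (d(i := e)) i) * (e - d i)
      + (\<Sum>j\<in>J - {i}. (W (rank_in J (d(i := e)) j) - W (rank_in J d j)) * (d j - d i))"
proof -
  let ?R = "rank_in J d" and ?R' = "rank_in J (d(i := e))"
  have split: "(\<Sum>j\<in>J. f j) = f i + (\<Sum>j\<in>J - {i}. f j)" for f :: "'a \<Rightarrow> real"
    using assms(1,2) by (simp add: sum.remove)
  have "(\<Sum>j\<in>J. W (?R' j)) = (\<Sum>j\<in>J. W (?R j))"
    using sum_rank_in[OF assms(1,3), of W] sum_rank_in[OF assms(1,4), of W] by simp
  then have weights: "(\<Sum>j\<in>J - {i}. W (?R' j) - W (?R j)) = W (?R i) - W (?R' i)"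
    using split[of "\<lambda>j. W (?R' j)"] split[of "\<lambda>j. W (?R j)"] by (simp add: sum_subtractf)
  have "(\<Sum>j\<in>J - {i}. W (?R' j) * (d(i := e)) j) = (\<Sum>j\<in>J - {i}. W (?R' j) * d j)"
    by (rule sum.cong) auto
  then have "(\<Sum>j\<in>J. W (?R' j) * (d(i := e)) j) - (\<Sum>j\<in>J. W (?R j) * d j)
      = W (?R' i) * e - W (?R i) * d i + (\<Sum>j\<in>J - {i}. (W (?R' j) - W (?R j)) * d j)"
    using split[of "\<lambda>j. W (?R' j) * (d(i := e)) j"] split[of "\<lambda>j. W (?R j) * d j"]
    by (simp add: sum_subtractf left_diff_distrib)
  moreover have "(\<Sum>j\<in>J - {i}. (W (?R' j) - W (?R j)) * (d j - d i))
      = (\<Sum>j\<in>J - {i}. (W (?R' j) - W (?R j)) * d j) - (W (?R i) - W (?R' i)) * d i"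
    unfolding weights[symmetric]
    by (simp add: right_diff_distrib left_diff_distrib sum_subtractf sum_distrib_right)
  ultimately show ?thesis by (simp add: algebra_simps)
qed

text \<open>The weight of another index changes only if its value lies between the old and the
  new position of the moved one.\<close>

lemma rank_weighted_sum_fun_upd_le:
  fixes d :: "'a \<Rightarrow> real" and W :: "nat \<Rightarrow> real"
  assumes "finite J" "i \<in> J" "inj_on d J" "inj_on (d(i := e)) J"
    and W: "\<And>k. 0 \<le> W k" "\<And>k. W k \<le> 1"
  shows "\<bar>(\<Sum>j\<in>J. W (rank_in J (d(i := e)) j) * (d(i := e)) j) - (\<Sum>j\<in>J. W (rank_in J d j) * d j)\<bar>
          \<le> real (card J) * \<bar>e - d i\<bar>"
proof -
  let ?R = "rank_in J d" and ?R' = "rank_in J (d(i := e))"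
  have summand_le: "\<bar>(W (?R' j) - W (?R j)) * (d j - d i)\<bar> \<le> \<bar>e - d i\<bar>" if j: "j \<in> J - {i}" for j
  proof (cases "e < d j \<longleftrightarrow> d i < d j")
    case False
    then have "\<bar>d j - d i\<bar> \<le> \<bar>e - d i\<bar>" by auto
    moreover have "\<bar>W (?R' j) - W (?R j)\<bar> \<le> 1" using W[of "?R' j"] W[of "?R j"] by auto
    ultimately have "\<bar>W (?R' j) - W (?R j)\<bar> * \<bar>d j - d i\<bar> \<le> 1 * \<bar>e - d i\<bar>"
      by (intro mult_mono) auto
    then show ?thesis by (simp add: abs_mult)
  next
    case True
    with j have "?R' j = ?R j" by (intro rank_in_fun_upd_other) auto
    then show ?thesis by simp
  qed
  have "\<bar>\<Sum>j\<in>J - {i}. (W (?R' j) - W (?R j)) * (d j - d i)\<bar>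
      \<le> (\<Sum>j\<in>J - {i}. \<bar>(W (?R' j) - W (?R j)) * (d j - d i)\<bar>)"
    by (rule sum_abs)
  also have "\<dots> \<le> (\<Sum>j\<in>J - {i}. \<bar>e - d i\<bar>)"
    by (rule sum_mono) (rule summand_le)
  finally have others: "\<bar>\<Sum>j\<in>J - {i}. (W (?R' j) - W (?R j)) * (d j - d i)\<bar>
      \<le> real (card (J - {i})) * \<bar>e - d i\<bar>"
    by simp
  have moved: "\<bar>W (?R' i) * (e - d i)\<bar> \<le> \<bar>e - d i\<bar>"
    using W[of "?R' i"] by (simp add: abs_mult mult_left_le_one_le)
  have "\<bar>(\<Sum>j\<in>J. W (?R' j) * (d(i := e)) j) - (\<Sum>j\<in>J. W (?R j) * d j)\<bar>
      \<le> \<bar>e - d i\<bar> + real (card (J - {i})) * \<bar>e - d i\<bar>"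
    unfolding rank_weighted_sum_fun_upd_eq[OF assms(1-4)]
    by (rule order_trans[OF abs_triangle_ineq add_mono[OF moved others]])
  moreover have "\<bar>e - d i\<bar> + real (card (J - {i})) * \<bar>e - d i\<bar> = real (card J) * \<bar>e - d i\<bar>"
    using card.remove[OF assms(1,2)] by (simp add: distrib_right)
  ultimately show ?thesis by (rule ord_le_eq_trans)
qed

lemma integral_tendsto_zero_dominated:
  fixes r :: "nat \<Rightarrow> 'a::euclidean_space \<Rightarrow> real"
  assumes N: "negligible N" and r: "\<And>k. r k integrable_on S" and g: "g integrable_on S"
    and le: "\<And>k q. q \<in> S - N \<Longrightarrow> \<bar>r k q\<bar> \<le> g q"
    and lim: "\<And>q. q \<in> S - N \<Longrightarrow> (\<lambda>k. r k q) \<longlonglongrightarrow> 0"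
  shows "(\<lambda>k. integral S (r k)) \<longlonglongrightarrow> 0"
proof -
  have spike: "negligible ((S - (S - N)) \<union> ((S - N) - S))"
    by (rule negligible_subset[OF N]) auto
  have "(\<lambda>k. integral (S - N) (r k)) \<longlonglongrightarrow> integral (S - N) (\<lambda>q. 0)"
  proof (rule dominated_convergence(2))
    show "r k integrable_on S - N" for k using r integrable_spike_set_eq[OF spike] by blast
    show "g integrable_on S - N" using g integrable_spike_set_eq[OF spike] by blast
  qed (use le lim in auto)
  moreover have "integral (S - N) (r k) = integral S (r k)" for k
    by (rule integral_spike_set) (auto intro: negligible_subset[OF N])
  ultimately show ?thesis by simp
qed

lemma has_derivative_integral_sequentially:
  fixes f :: "'a::euclidean_space \<Rightarrow> 'b::euclidean_space \<Rightarrow> real" and D :: "'b \<Rightarrow> 'a"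
  assumes "open U" "a \<in> U"
    and f: "\<And>x. x \<in> U \<Longrightarrow> f x integrable_on S" and D: "D integrable_on S"
    and dom: "\<And>X. (\<And>k. X k \<in> U - {a}) \<Longrightarrow> X \<longlonglongrightarrow> a \<Longrightarrow>
      \<exists>N g. negligible N \<and> g integrable_on S \<and>
        (\<forall>k. \<forall>q\<in>S - N. \<bar>f (X k) q - f a q - D q \<bullet> (X k - a)\<bar> \<le> g q * norm (X k - a)) \<and>
        (\<forall>q\<in>S - N. (\<lambda>k. (f (X k) q - f a q - D q \<bullet> (X k - a)) / norm (X k - a)) \<longlonglongrightarrow> 0)"
  shows "((\<lambda>x. integral S (f x)) has_derivative (\<lambda>h. integral S D \<bullet> h)) (at a)"
proof -
  let ?F = "\<lambda>x. integral S (f x)"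
  have "((\<lambda>x. norm (?F x - ?F a - integral S D \<bullet> (x - a)) / norm (x - a)) \<longlongrightarrow> 0) (at a within U)"
    unfolding tendsto_at_iff_sequentially comp_def
  proof (intro allI impI)
    fix X assume XU: "\<forall>k. X k \<in> U - {a}" and "X \<longlonglongrightarrow> a"
    then obtain N g where N: "negligible N" and g: "g integrable_on S"
      and le: "\<And>k q. q \<in> S - N \<Longrightarrow> \<bar>f (X k) q - f a q - D q \<bullet> (X k - a)\<bar> \<le> g q * norm (X k - a)"
      and lim: "\<And>q. q \<in> S - N \<Longrightarrow> (\<lambda>k. (f (X k) q - f a q - D q \<bullet> (X k - a)) / norm (X k - a)) \<longlonglongrightarrow> 0"
      using dom by meson
    define r where "r k q = (f (X k) q - f a q - D q \<bullet> (X k - a)) / norm (X k - a)" for k q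
    have Xne: "norm (X k - a) > 0" for k using XU by auto
    have "integral S (r k) = (?F (X k) - ?F a - integral S D \<bullet> (X k - a)) / norm (X k - a)" for k
      unfolding r_def[abs_def] using f[of "X k"] f[of a] XU assms(2) D
      by (simp add: integral_diff integrable_diff integrable_component)
    then have eq: "norm (?F (X k) - ?F a - integral S D \<bullet> (X k - a)) / norm (X k - a) = \<bar>integral S (r k)\<bar>" for k
      using Xne[of k] by (simp add: abs_divide)
    have "(\<lambda>k. integral S (r k)) \<longlonglongrightarrow> 0"
    proof (rule integral_tendsto_zero_dominated[OF N _ g])
      show "r k integrable_on S" for k
        unfolding r_def using f[of "X k"] f[of a] XU assms(2)
        by (intro integrable_on_divide integrable_diff integrable_component D) auto
      show "\<bar>r k q\<bar> \<le> g q" if "q \<in> S - N" for k q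
        using le[OF that, of k] Xne[of k] by (simp add: r_def abs_divide divide_le_eq mult.commute)
      show "(\<lambda>k. r k q) \<longlonglongrightarrow> 0" if "q \<in> S - N" for q
        using lim[OF that] by (simp add: r_def)
    qed
    then show "(\<lambda>k. norm (?F (X k) - ?F a - integral S D \<bullet> (X k - a)) / norm (X k - a)) \<longlonglongrightarrow> 0"
      unfolding eq by (rule tendsto_rabs_zero)
  qed
  moreover have "at a within U = at a"
    by (rule at_within_open[OF assms(2,1)])
  ultimately show ?thesis
    unfolding has_derivative_iff_norm by (simp add: bounded_linear_inner_right)
qed

lemma negligible_bisector:
  fixes u v :: "'a::euclidean_space"
  assumes "u \<noteq> v"
  shows "negligible {q. norm (q - u) = norm (q - v)}"
proof -
  have "norm (q - u) = norm (q - v) \<longleftrightarrow> (2 *\<^sub>R (v - u)) \<bullet> q = v \<bullet> v - u \<bullet> u" for q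
  proof -
    have "norm (q - u) = norm (q - v) \<longleftrightarrow> (norm (q - u))^2 = (norm (q - v))^2"
      by (simp add: power2_eq_iff_nonneg)
    also have "\<dots> \<longleftrightarrow> (2 *\<^sub>R (v - u)) \<bullet> q = v \<bullet> v - u \<bullet> u"
      by (simp add: power2_norm_eq_inner inner_diff_left inner_diff_right inner_commute algebra_simps)
    finally show ?thesis .
  qed
  moreover have "negligible {q. (2 *\<^sub>R (v - u)) \<bullet> q = v \<bullet> v - u \<bullet> u}"
    by (rule negligible_hyperplane) (use assms in simp)
  ultimately show ?thesis by simp
qed

definition bisectors :: "'a::real_normed_vector set \<Rightarrow> 'a set" where
  "bisectors A = {q. \<exists>u\<in>A. \<exists>v\<in>A. u \<noteq> v \<and> norm (q - u) = norm (q - v)}"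

lemma negligible_bisectors:
  fixes A :: "'a::euclidean_space set"
  assumes "countable A"
  shows "negligible (bisectors A)"
proof -
  have "bisectors A = \<Union>((\<lambda>(u, v). {q. norm (q - u) = norm (q - v)}) ` {(u, v) \<in> A \<times> A. u \<noteq> v})"
    by (auto simp: bisectors_def)
  moreover have "countable {(u, v) \<in> A \<times> A. u \<noteq> v}"
    by (rule countable_subset[OF _ countable_SIGMA[OF assms assms]]) auto
  ultimately show ?thesis
    by (auto intro!: negligible_countable_Union negligible_bisector)
qed

lemma inj_on_norm_diff_notin_bisectors:
  assumes "inj_on P J" "P ` J \<subseteq> A" "q \<notin> bisectors A"
  shows "inj_on (\<lambda>l. norm (q - P l)) J"
  using assms unfolding bisectors_def inj_on_def by blast

lemma borel_measurable_lebesgueI: "f \<in> borel_measurable borel \<Longrightarrow> f \<in> borel_measurable lebesgue"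
  by (simp add: measurable_completion)

lemma hlam_borel_measurable [measurable]: "(\<lambda>q. hlam lam n P j q) \<in> borel_measurable lebesgue"
  unfolding hlam_def Rfun_def kappa_def by (rule borel_measurable_lebesgueI) measurable

lemma power2_norm_less_iff: "(norm x)^2 < (norm y)^2 \<longleftrightarrow> norm x < norm y"
  by (simp flip: not_le)

lemma power2_norm_diff_sub:
  fixes q x a :: "'a::real_inner"
  shows "(norm (q - x))^2 - (norm (q - a))^2 = (norm (x - a))^2 - 2 * ((q - a) \<bullet> (x - a))"
  by (simp add: power2_norm_eq_inner inner_diff_left inner_diff_right inner_commute algebra_simps)

lemma abs_power2_norm_diff_sub_le:
  fixes q x a :: "'a::real_inner"
  shows "\<bar>(norm (q - x))^2 - (norm (q - a))^2\<bar> \<le> norm (x - a) * (2 * norm (q - a) + norm (x - a))"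
proof -
  have "\<bar>(q - a) \<bullet> (x - a)\<bar> \<le> norm (q - a) * norm (x - a)"
    by (rule Cauchy_Schwarz_ineq2)
  moreover have "norm (x - a) * (2 * norm (q - a) + norm (x - a))
      = (norm (x - a))^2 + 2 * (norm (q - a) * norm (x - a))"
    by (simp add: algebra_simps power2_eq_square)
  ultimately show ?thesis
    using zero_le_power2[of "norm (x - a)"] unfolding power2_norm_diff_sub abs_le_iff by (intro conjI) linarith+
qed

definition Hhat_density :: "real \<Rightarrow> nat \<Rightarrow> (nat \<Rightarrow> 'a::euclidean_space) \<Rightarrow> 'a \<Rightarrow> real" where
  "Hhat_density lam n P q = (\<Sum>j = 1..n. hlam lam n P j q * (norm (q - P j))^2)"

definition sq_dists :: "'a::real_normed_vector \<Rightarrow> (nat \<Rightarrow> 'a) \<Rightarrow> nat \<Rightarrow> real" where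
  "sq_dists q P l = (norm (q - P l))^2"

lemma sq_dists_fun_upd: "sq_dists q (P(i := x)) = (sq_dists q P)(i := (norm (q - x))^2)"
  by (auto simp: sq_dists_def)

lemma inj_on_sq_dists:
  assumes "inj_on (\<lambda>l. norm (q - P l)) J"
  shows "inj_on (sq_dists q P) J"
  using assms by (auto simp: inj_on_def sq_dists_def power2_eq_iff_nonneg)

lemma Rfun_eq_rank_in: "Rfun n P j q = real (rank_in {1..n} (sq_dists q P) j)"
proof -
  have "Rfun n P j q = (\<Sum>l\<in>{1..n}. of_bool (sq_dists q P l < sq_dists q P j))"
    unfolding Rfun_def kappa_def sq_dists_def power2_norm_less_iff by (rule sum.cong) auto
  also have "\<dots> = real (rank_in {1..n} (sq_dists q P) j)"
    by (simp add: rank_in_def Int_def conj_commute)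
  finally show ?thesis .
qed

lemma hlam_eq_rank_in: "hlam lam n P j q = exp (- real (rank_in {1..n} (sq_dists q P) j) / lam)"
  unfolding hlam_def Rfun_eq_rank_in ..

lemma hlam_nonneg: "0 \<le> hlam lam n P j q"
  by (simp add: hlam_def)

lemma hlam_le_one: "0 \<le> lam \<Longrightarrow> hlam lam n P j q \<le> 1"
  by (simp add: hlam_eq_rank_in divide_nonneg_nonneg)

lemma Hhat_density_eq_rank_in:
  "Hhat_density lam n P q =
    (\<Sum>j\<in>{1..n}. exp (- real (rank_in {1..n} (sq_dists q P) j) / lam) * sq_dists q P j)"
  unfolding Hhat_density_def hlam_eq_rank_in sq_dists_def ..

lemma Hhat_density_fun_upd_le:
  assumes "0 \<le> lam" "i \<in> {1..n}"
    and "inj_on (\<lambda>l. norm (q - P l)) {1..n}" "inj_on (\<lambda>l. norm (q - (P(i := x)) l)) {1..n}"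
  shows "\<bar>Hhat_density lam n (P(i := x)) q - Hhat_density lam n P q\<bar>
          \<le> real n * \<bar>(norm (q - x))^2 - (norm (q - P i))^2\<bar>"
proof -
  let ?d = "sq_dists q P" and ?e = "(norm (q - x))^2"
  have "\<bar>(\<Sum>j\<in>{1..n}. exp (- real (rank_in {1..n} (?d(i := ?e)) j) / lam) * (?d(i := ?e)) j)
        - (\<Sum>j\<in>{1..n}. exp (- real (rank_in {1..n} ?d j) / lam) * ?d j)\<bar>
      \<le> real (card {1..n}) * \<bar>?e - ?d i\<bar>"
  proof (rule rank_weighted_sum_fun_upd_le)
    show "inj_on ?d {1..n}" by (rule inj_on_sq_dists[OF assms(3)])
    show "inj_on (?d(i := ?e)) {1..n}"
      using inj_on_sq_dists[OF assms(4)] by (simp only: sq_dists_fun_upd)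
  qed (use assms(1,2) in \<open>auto simp: divide_nonneg_nonneg\<close>)
  then show ?thesis
    unfolding Hhat_density_eq_rank_in sq_dists_fun_upd by (simp add: sq_dists_def[of q P i])
qed

lemma Hhat_density_fun_upd_eventually:
  assumes "i \<in> {1..n}" "\<forall>l\<in>{1..n} - {i}. norm (q - P l) \<noteq> norm (q - P i)"
  shows "eventually (\<lambda>x. Hhat_density lam n (P(i := x)) q - Hhat_density lam n P q
            = hlam lam n P i q * ((norm (q - x))^2 - (norm (q - P i))^2)) (nhds (P i))"
proof -
  let ?d = "sq_dists q P"
  define W where "W = (\<lambda>j. exp (- real (rank_in {1..n} ?d j) / lam))"
  have "\<forall>l\<in>{1..n} - {i}. ?d l \<noteq> ?d i"
    using assms(2) by (simp add: sq_dists_def power2_eq_iff_nonneg)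
  then have "eventually (\<lambda>e. \<forall>j\<in>{1..n}. rank_in {1..n} (?d(i := e)) j = rank_in {1..n} ?d j)
      (nhds (?d i))"
    using assms(1) by (intro eventually_rank_in_fun_upd) auto
  moreover have "((\<lambda>x. (norm (q - x))^2) \<longlongrightarrow> ?d i) (nhds (P i))"
    unfolding sq_dists_def by (intro tendsto_intros filterlim_ident)
  ultimately have "eventually (\<lambda>x. \<forall>j\<in>{1..n}.
      rank_in {1..n} (?d(i := (norm (q - x))^2)) j = rank_in {1..n} ?d j) (nhds (P i))"
    by (rule eventually_compose_filterlim)
  then show ?thesis
  proof eventually_elim
    case (elim x)
    have "Hhat_density lam n (P(i := x)) q - Hhat_density lam n P q
        = (\<Sum>j\<in>{1..n}. W j * ((?d(i := (norm (q - x))^2)) j - ?d j))"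
      unfolding Hhat_density_eq_rank_in sq_dists_fun_upd W_def using elim
      by (simp add: sum_subtractf right_diff_distrib del: fun_upd_apply)
    also have "\<dots> = W i * ((norm (q - x))^2 - ?d i)"
      using assms(1) by (simp add: sum.remove)
    finally show ?case by (simp add: W_def sq_dists_def hlam_eq_rank_in)
  qed
qed

lemma absolutely_integrable_hlam_scaleR:
  fixes g :: "'a::euclidean_space \<Rightarrow> 'b::euclidean_space"
  assumes "Q \<in> sets lebesgue" "bounded (g ` Q)" "g \<in> borel_measurable lebesgue"
    and "\<phi> absolutely_integrable_on Q" "0 \<le> lam"
  shows "(\<lambda>q. \<phi> q *\<^sub>R (hlam lam n P j q *\<^sub>R g q)) absolutely_integrable_on Q"
proof (rule absolutely_integrable_bounded_measurable_product[where h = "\<lambda>u s. s *\<^sub>R u"])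
  show "bilinear (\<lambda>(u::'b) (s::real). s *\<^sub>R u)"
    using bounded_bilinear.flip[OF bounded_bilinear_scaleR] by (simp add: bilinear_conv_bounded_bilinear)
  show "(\<lambda>q. hlam lam n P j q *\<^sub>R g q) \<in> borel_measurable (lebesgue_on Q)"
    by (rule measurable_restrict_space1) (use assms(3) in measurable)
  obtain B where B: "\<And>q. q \<in> Q \<Longrightarrow> norm (g q) \<le> B"
    using assms(2) by (auto simp: bounded_iff)
  have "norm (hlam lam n P j q *\<^sub>R g q) \<le> B" if "q \<in> Q" for q
  proof -
    have "hlam lam n P j q * norm (g q) \<le> norm (g q)"
      by (rule mult_left_le_one_le) (simp_all add: hlam_nonneg hlam_le_one assms(5))
    with B[OF that] show ?thesis by (simp add: hlam_nonneg)
  qed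
  then show "bounded ((\<lambda>q. hlam lam n P j q *\<^sub>R g q) ` Q)"
    by (auto simp: bounded_iff)
qed (use assms in auto)

lemma integrable_hlam_sq_dist:
  assumes "bounded Q" "Q \<in> sets lebesgue" "\<phi> absolutely_integrable_on Q" "0 \<le> lam"
  shows "(\<lambda>q. hlam lam n P j q * (norm (q - c))^2 * \<phi> q) integrable_on Q"
proof -
  obtain B where B: "\<And>q. q \<in> Q \<Longrightarrow> norm (q - c) \<le> B"
    using bounded_translation_minus[of Q c, OF assms(1)] by (auto simp: bounded_iff)
  have "bounded ((\<lambda>q. (norm (q - c))^2) ` Q)"
    using B by (auto simp: bounded_iff intro!: exI[of _ "B^2"] power_mono)
  then have "(\<lambda>q. \<phi> q *\<^sub>R (hlam lam n P j q *\<^sub>R (norm (q - c))^2)) absolutely_integrable_on Q"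
    by (intro absolutely_integrable_hlam_scaleR assms borel_measurable_lebesgueI) measurable
  then show ?thesis
    by (simp add: mult.commute mult.left_commute set_lebesgue_integral_eq_integral(1))
qed

lemma integrable_hlam_moment:
  assumes "bounded Q" "Q \<in> sets lebesgue" "\<phi> absolutely_integrable_on Q" "0 \<le> lam"
  shows "(\<lambda>q. (hlam lam n P j q * \<phi> q) *\<^sub>R (q - c)) integrable_on Q"
proof -
  have "(\<lambda>q. \<phi> q *\<^sub>R (hlam lam n P j q *\<^sub>R (q - c))) absolutely_integrable_on Q"
    by (intro absolutely_integrable_hlam_scaleR bounded_translation_minus assms borel_measurable_lebesgueI)
      measurable
  then show ?thesis
    by (simp add: mult.commute set_lebesgue_integral_eq_integral(1))
qed

lemma integrable_Hhat_density:
  assumes "bounded Q" "Q \<in> sets lebesgue" "\<phi> absolutely_integrable_on Q" "0 \<le> lam"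
  shows "(\<lambda>q. Hhat_density lam n P q * \<phi> q / 2) integrable_on Q"
  unfolding Hhat_density_def sum_distrib_right
  by (intro integrable_on_divide integrable_sum finite_atLeastAtMost integrable_hlam_sq_dist assms)

lemma Hhat_eq_integral:
  assumes "bounded Q" "Q \<in> sets lebesgue" "\<phi> absolutely_integrable_on Q" "0 \<le> lam"
  shows "Hhat lam Q \<phi> n P = integral Q (\<lambda>q. Hhat_density lam n P q * \<phi> q / 2)"
proof -
  have "integral Q (\<lambda>q. Hhat_density lam n P q * \<phi> q)
      = (\<Sum>j = 1..n. integral Q (\<lambda>q. hlam lam n P j q * (norm (q - P j))^2 * \<phi> q))"
    unfolding Hhat_density_def sum_distrib_right
    by (intro integral_sum finite_atLeastAtMost integrable_hlam_sq_dist assms)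
  then show ?thesis by (simp add: Hhat_def)
qed

text \<open>First-order remainder of the density at \<open>P i\<close>, with the derivative taken as if
  the ranks were frozen.\<close>

definition Hhat_density_remainder :: "real \<Rightarrow> nat \<Rightarrow> (nat \<Rightarrow> 'a::euclidean_space) \<Rightarrow> nat \<Rightarrow> 'a \<Rightarrow> 'a \<Rightarrow> real"
  where "Hhat_density_remainder lam n P i x q =
    Hhat_density lam n (P(i := x)) q - Hhat_density lam n P q + 2 * hlam lam n P i q * ((q - P i) \<bullet> (x - P i))"

lemma Hhat_density_remainder_le:
  assumes "0 \<le> lam" "i \<in> {1..n}" "inj_on P {1..n}" "inj_on (P(i := x)) {1..n}"
    and "P ` {1..n} \<subseteq> A" "x \<in> A" "q \<notin> bisectors A"
  shows "\<bar>Hhat_density_remainder lam n P i x q\<bar>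
          \<le> (real n * (2 * norm (q - P i) + norm (x - P i)) + 2 * norm (q - P i)) * norm (x - P i)"
proof -
  have "(P(i := x)) ` {1..n} \<subseteq> A"
    using assms(5,6) by (auto simp: fun_upd_image)
  then have inj: "inj_on (\<lambda>l. norm (q - P l)) {1..n}" "inj_on (\<lambda>l. norm (q - (P(i := x)) l)) {1..n}"
    using inj_on_norm_diff_notin_bisectors assms(3-5,7) by blast+
  have "\<bar>Hhat_density lam n (P(i := x)) q - Hhat_density lam n P q\<bar>
      \<le> real n * (norm (x - P i) * (2 * norm (q - P i) + norm (x - P i)))"
    using Hhat_density_fun_upd_le[OF assms(1,2) inj] abs_power2_norm_diff_sub_le[of q x "P i"]
    by (meson mult_left_mono of_nat_0_le_iff order_trans)
  moreover have "\<bar>2 * hlam lam n P i q * ((q - P i) \<bullet> (x - P i))\<bar> \<le> 2 * (norm (q - P i) * norm (x - P i))"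
  proof -
    have "hlam lam n P i q * \<bar>(q - P i) \<bullet> (x - P i)\<bar> \<le> 1 * (norm (q - P i) * norm (x - P i))"
      using Cauchy_Schwarz_ineq2[of "q - P i" "x - P i"] hlam_nonneg hlam_le_one[OF assms(1)]
      by (intro mult_mono) auto
    then show ?thesis by (simp add: abs_mult hlam_nonneg)
  qed
  ultimately show ?thesis
    unfolding Hhat_density_remainder_def by (simp add: algebra_simps)
qed

lemma Hhat_density_remainder_eventually:
  assumes "i \<in> {1..n}" "inj_on P {1..n}" "P ` {1..n} \<subseteq> A" "q \<notin> bisectors A"
  shows "eventually (\<lambda>x. Hhat_density_remainder lam n P i x q = hlam lam n P i q * (norm (x - P i))^2)
          (nhds (P i))"
proof -
  have "\<forall>l\<in>{1..n} - {i}. norm (q - P l) \<noteq> norm (q - P i)"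
    using inj_onD[OF inj_on_norm_diff_notin_bisectors[OF assms(2-4)], of _ i] assms(1) by blast
  from Hhat_density_fun_upd_eventually[OF assms(1) this] show ?thesis
    by eventually_elim (simp add: Hhat_density_remainder_def power2_norm_diff_sub algebra_simps)
qed

lemma tendsto_Hhat_density_remainder_quotient:
  assumes "i \<in> {1..n}" "inj_on P {1..n}" "P ` {1..n} \<subseteq> A" "q \<notin> bisectors A"
    and "X \<longlonglongrightarrow> P i" "\<And>k. X k \<noteq> P i"
  shows "(\<lambda>k. Hhat_density_remainder lam n P i (X k) q / norm (X k - P i)) \<longlonglongrightarrow> 0"
proof -
  have "eventually (\<lambda>k. Hhat_density_remainder lam n P i (X k) q = hlam lam n P i q * (norm (X k - P i))^2)
      sequentially"
    using Hhat_density_remainder_eventually[OF assms(1-4)] assms(5) by (rule eventually_compose_filterlim)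
  then have "eventually (\<lambda>k. hlam lam n P i q * norm (X k - P i)
      = Hhat_density_remainder lam n P i (X k) q / norm (X k - P i)) sequentially"
    by eventually_elim (use assms(6) in \<open>simp add: power2_eq_square\<close>)
  moreover have "(\<lambda>k. hlam lam n P i q * norm (X k - P i)) \<longlonglongrightarrow> 0"
    using tendsto_mult[OF tendsto_const tendsto_norm_zero[OF LIM_zero[OF assms(5)]]] by simp
  ultimately show ?thesis
    by (rule Lim_transform_eventually[rotated])
qed

lemma Hhat_density_remainder_sequence:
  fixes X :: "nat \<Rightarrow> 'a::euclidean_space"
  assumes "bounded Q" "0 \<le> lam" "inj_on P {1..n}" "i \<in> {1..n}"
    and X: "\<And>k. X k \<notin> P ` {1..n}" "X \<longlonglongrightarrow> P i"
  obtains N C where "negligible N"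
    and "\<And>k q. q \<in> Q - N \<Longrightarrow> \<bar>Hhat_density_remainder lam n P i (X k) q\<bar> \<le> C * norm (X k - P i)"
    and "\<And>q. q \<in> Q - N \<Longrightarrow> (\<lambda>k. Hhat_density_remainder lam n P i (X k) q / norm (X k - P i)) \<longlonglongrightarrow> 0"
proof -
  define A where "A = P ` {1..n} \<union> range X"
  \<comment> \<open>Off the bisectors of the countably many points in \<open>A\<close>, all distances to \<open>q\<close> are distinct.\<close>
  obtain B where B: "\<And>q. q \<in> Q \<Longrightarrow> norm (q - P i) \<le> B"
    using bounded_translation_minus[of Q "P i", OF assms(1)] by (auto simp: bounded_iff)
  obtain M where M: "\<And>k. norm (X k - P i) \<le> M"
    using convergent_imp_Bseq[OF convergentI[OF LIM_zero[OF X(2)]]] by (auto simp: Bseq_def)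
  have "negligible (bisectors A)"
    unfolding A_def by (rule negligible_bisectors) auto
  moreover have "\<bar>Hhat_density_remainder lam n P i (X k) q\<bar> \<le> (real n * (2 * B + M) + 2 * B) * norm (X k - P i)"
    if q: "q \<in> Q - bisectors A" for k q
  proof -
    have "\<bar>Hhat_density_remainder lam n P i (X k) q\<bar>
        \<le> (real n * (2 * norm (q - P i) + norm (X k - P i)) + 2 * norm (q - P i)) * norm (X k - P i)"
      by (rule Hhat_density_remainder_le[where A = A, OF assms(2,4,3) inj_on_fun_updI[OF assms(3) X(1)]])
        (use q in \<open>auto simp: A_def\<close>)
    also have "\<dots> \<le> (real n * (2 * B + M) + 2 * B) * norm (X k - P i)"
      by (intro mult_right_mono add_mono mult_left_mono) (use B[of q] q M in auto)
    finally show ?thesis .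
  qed
  moreover have "(\<lambda>k. Hhat_density_remainder lam n P i (X k) q / norm (X k - P i)) \<longlonglongrightarrow> 0"
    if q: "q \<in> Q - bisectors A" for q
  proof (rule tendsto_Hhat_density_remainder_quotient[where A = A, OF assms(4,3) _ _ X(2)])
    show "X k \<noteq> P i" for k
      using X(1)[of k] assms(4) by blast
  qed (use q in \<open>auto simp: A_def\<close>)
  ultimately show ?thesis
    by (rule that)
qed

theorem has_derivative_Hhat:
  fixes Q :: "'a::euclidean_space set" and P :: "nat \<Rightarrow> 'a"
  assumes Q: "bounded Q" "Q \<in> sets lebesgue" and \<phi>: "\<phi> absolutely_integrable_on Q" and lam: "0 \<le> lam"
    and P: "inj_on P {1..n}" "i \<in> {1..n}"
  shows "((\<lambda>x. Hhat lam Q \<phi> n (P(i := x))) has_derivative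
          (\<lambda>v. (- integral Q (\<lambda>q. (hlam lam n P i q * \<phi> q) *\<^sub>R (q - P i))) \<bullet> v)) (at (P i))"
proof -
  let ?J = "{1..n}" and ?rem = "Hhat_density_remainder lam n P i"
  define a where "a = P i"
  define U where "U = - P ` (?J - {i})"
  define f where "f = (\<lambda>x q. Hhat_density lam n (P(i := x)) q * \<phi> q / 2)"
  define D where "D = (\<lambda>q. - ((hlam lam n P i q * \<phi> q) *\<^sub>R (q - a)))"
  have f_rem: "f x q - f a q - D q \<bullet> (x - a) = \<phi> q / 2 * ?rem x q" for x q
    unfolding f_def D_def Hhat_density_remainder_def a_def by (simp add: algebra_simps)
  have "a \<notin> P ` (?J - {i})"
    using P unfolding a_def by (auto dest: inj_onD)
  then have U: "open U" "a \<in> U"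
    unfolding U_def by (auto intro!: finite_imp_closed)
  have "((\<lambda>x. integral Q (f x)) has_derivative (\<lambda>h. integral Q D \<bullet> h)) (at a)"
  proof (rule has_derivative_integral_sequentially[OF U])
    show "f x integrable_on Q" for x
      unfolding f_def by (rule integrable_Hhat_density[OF Q \<phi> lam])
    show "D integrable_on Q"
      unfolding D_def by (intro integrable_neg integrable_hlam_moment[OF Q \<phi> lam])
  next
    fix X assume XU: "\<And>k. X k \<in> U - {a}" and Xa: "X \<longlonglongrightarrow> a"
    have X_notin: "X k \<notin> P ` ?J" for k
      using XU[of k] P(2) by (auto simp: U_def a_def)
    obtain N C where N: "negligible N"
      and bound: "\<And>k q. q \<in> Q - N \<Longrightarrow> \<bar>?rem (X k) q\<bar> \<le> C * norm (X k - a)"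
      and lim: "\<And>q. q \<in> Q - N \<Longrightarrow> (\<lambda>k. ?rem (X k) q / norm (X k - a)) \<longlonglongrightarrow> 0"
      by (rule Hhat_density_remainder_sequence[OF Q(1) lam P X_notin Xa[unfolded a_def], folded a_def]) blast
    have "\<bar>f (X k) q - f a q - D q \<bullet> (X k - a)\<bar> \<le> C / 2 * \<bar>\<phi> q\<bar> * norm (X k - a)"
      if "q \<in> Q - N" for k q
      using mult_left_mono[OF bound[OF that, of k], of "\<bar>\<phi> q\<bar> / 2"]
      by (simp add: f_rem abs_mult mult_ac)
    moreover have "(\<lambda>k. (f (X k) q - f a q - D q \<bullet> (X k - a)) / norm (X k - a)) \<longlonglongrightarrow> 0"
      if "q \<in> Q - N" for q
      using tendsto_mult[OF tendsto_const[of "\<phi> q / 2"] lim[OF that]] by (simp add: f_rem)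
    moreover have "(\<lambda>q. C / 2 * \<bar>\<phi> q\<bar>) integrable_on Q"
      using \<phi> by (intro integrable_on_mult_right) (simp add: absolutely_integrable_on_def)
    ultimately show "\<exists>N g. negligible N \<and> g integrable_on Q \<and>
        (\<forall>k. \<forall>q\<in>Q - N. \<bar>f (X k) q - f a q - D q \<bullet> (X k - a)\<bar> \<le> g q * norm (X k - a)) \<and>
        (\<forall>q\<in>Q - N. (\<lambda>k. (f (X k) q - f a q - D q \<bullet> (X k - a)) / norm (X k - a)) \<longlonglongrightarrow> 0)"
      using N by (intro exI[of _ N] exI[of _ "\<lambda>q. C / 2 * \<bar>\<phi> q\<bar>"]) auto
  qed
  moreover have "(\<lambda>x. Hhat lam Q \<phi> n (P(i := x))) = (\<lambda>x. integral Q (f x))"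
    unfolding f_def by (simp add: Hhat_eq_integral[OF Q \<phi> lam])
  ultimately show ?thesis
    by (simp add: D_def a_def)
qed

theorem lemma3:
  fixes Q :: "'a::euclidean_space set"
    and \<phi> :: "'a \<Rightarrow> real"
    and \<eta> :: real
    and lam :: "real \<Rightarrow> real"
    and p :: "nat \<Rightarrow> real \<Rightarrow> 'a"
    and n i :: nat
    and t :: real
  assumes "bounded Q" and "convex Q"
    and "\<forall>q\<in>Q. \<phi> q \<ge> 0"
    and "\<phi> integrable_on Q"
    and "0 < integral Q \<phi>" and "integral Q \<phi> \<le> \<eta>"
    and "\<forall>s\<ge>0. lam s \<ge> 0"
    and "(lam \<longlongrightarrow> 0) at_top"
    and "\<forall>j\<in>{1..n}. \<forall>s\<ge>0. p j s \<in> Q"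
    and "t \<ge> 0"
    and "inj_on (\<lambda>j. p j t) {1..n}"
    and "i \<in> {1..n}"
  shows "((\<lambda>x. Hhat (lam t) Q \<phi> n ((\<lambda>j. p j t)(i := x)))
           has_derivative
          (\<lambda>v. (- integral Q (\<lambda>q. (hlam (lam t) n (\<lambda>j. p j t) i q * \<phi> q) *\<^sub>R (q - p i t))) \<bullet> v))
         (at (p i t))"
proof -
  \<comment> \<open>Convexity only serves to make \<open>Q\<close> measurable.\<close>
  have "Q \<in> sets lebesgue"
    using measurable_convex[OF assms(2,1)] by (simp add: fmeasurableD)
  moreover have "\<phi> absolutely_integrable_on Q"
    using nonnegative_absolutely_integrable_1[OF assms(4)] assms(3) by blast
  moreover have "0 \<le> lam t"
    using assms(7,10) by simp
  ultimately show ?thesis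
    using has_derivative_Hhat[OF assms(1) _ _ _ assms(11,12)] by blast
qed

end
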